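(* Let $S,B\subseteq\{-1,1,*\}^X$ be binary hypothesis classes. For any $\varepsilon,\delta\ge0$ and $n\in\mathbb{Z}_{\ge0}$, every learner that solves comparative learning $\mathsf{CompL}_n(S,B,\varepsilon,\delta)$ also solves realizable learning $\mathsf{ReaL}_n(\mathbf{A}_{S,B},\varepsilon,\delta)$; i.e. $\mathsf{CompL}_n(S,B,\varepsilon,\delta)\subseteq\mathsf{ReaL}_n(\mathbf{A}_{S,B},\varepsilon,\delta)$.
   Context: $X$ is a non-empty set; hypotheses are functions $X\to\{-1,1,*\}$; distributions are discrete. For $s,b:X\to\{-1,1,*\}$, the agreement hypothesis $\mathbf{a}_{s,b}$ is $\mathbf{a}_{s,b}(x)=-1$ if $s(x)=b(x)=-1$, $=1$ if $s(x)=b(x)=1$, and $=*$ otherwise; $\mathbf{A}_{S,B}=\{\mathbf{a}_{s,b}:s\in S,b\in B\}$. A learner takes $n$ data points in $X\times\{-1,1\}$ and outputs $f:X\to\{-1,1\}$ (possibly randomized). It belongs to $\mathsf{ReaL}_n(H,\varepsilon,\delta)$ if for every distribution $\mu$ on $X\times\{-1,1\}$ with $\Pr_\mu[h(x)=y]=1$ for some $h\in H$, given $n$ i.i.d. samples from $\mu$, with probability $\ge1-\delta$ it outputs $f$ with $\Pr_\mu[f(x)\neq y]\le\varepsilon$. It belongs to $\mathsf{CompL}_n(S,B,\varepsilon,\delta)$ if for every distribution $\mu$ with $\Pr_\mu[s(x)=y]=1$ for some $s\in S$, with probability $\ge1-\delta$ it outputs $f$ with $\Pr_\mu[f(x)\ne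 y]\le\inf_{b\in B}\Pr_\mu[b(x)\ne y]+\varepsilon$ ($b(x)=*$ counts as an error). *)

theory Defs
  imports "HOL-Probability.Probability"
begin

text \<open>Binary labels {-1,1}; a (partial) hypothesis maps X to {-1,1,*},
  encoded as lab option with None standing for *.\<close>
datatype lab = Neg | Pos

type_synonym 'x hyp = "'x \<Rightarrow> lab option"

type_synonym 'x learner = "('x \<times> lab) list \<Rightarrow> ('x \<Rightarrow> lab) pmf"

definition agree :: "'x hyp \<Rightarrow> 'x hyp \<Rightarrow> 'x hyp" where
  "agree s b = (\<lambda>x. if s x = Some Neg \<and> b x = Some Neg then Some Neg
                    else if s x = Some Pos \<and> b x = Some Pos then Some Pos else None)"

definition agreeClass :: "'x hyp set \<Rightarrow> 'x hyp set \<Rightarrow> 'x hyp set" where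
  "agreeClass S B = {agree s b | s b. s \<in> S \<and> b \<in> B}"

definition err :: "('x \<times> lab) pmf \<Rightarrow> ('x \<Rightarrow> lab) \<Rightarrow> real" where
  "err \<mu> f = measure_pmf.prob \<mu> {(x, y). f x \<noteq> y}"

definition herr :: "('x \<times> lab) pmf \<Rightarrow> 'x hyp \<Rightarrow> real" where
  "herr \<mu> h = measure_pmf.prob \<mu> {(x, y). h x \<noteq> Some y}"

definition realizable :: "'x hyp set \<Rightarrow> ('x \<times> lab) pmf \<Rightarrow> bool" where
  "realizable H \<mu> \<longleftrightarrow> (\<exists>h\<in>H. measure_pmf.prob \<mu> {(x, y). h x = Some y} = 1)"

definition ReaL :: "nat \<Rightarrow> 'x hyp set \<Rightarrow> real \<Rightarrow> real \<Rightarrow> 'x learner set" where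
  "ReaL n H \<epsilon> \<delta> = {L. \<forall>\<mu>. realizable H \<mu> \<longrightarrow>
      measure_pmf.prob (bind_pmf (replicate_pmf n \<mu>) L) {f. err \<mu> f \<le> \<epsilon>} \<ge> 1 - \<delta>}"

definition CompL :: "nat \<Rightarrow> 'x hyp set \<Rightarrow> 'x hyp set \<Rightarrow> real \<Rightarrow> real \<Rightarrow> 'x learner set" where
  "CompL n S B \<epsilon> \<delta> = {L. \<forall>\<mu>. realizable S \<mu> \<longrightarrow>
      measure_pmf.prob (bind_pmf (replicate_pmf n \<mu>) L)
        {f. err \<mu> f \<le> (INF b\<in>B. herr \<mu> b) + \<epsilon>} \<ge> 1 - \<delta>}"

end

theory Submission
  imports Defs
begin

text \<open>If \<mu> is realized by the agreement hypothesis of s \<in> S and b \<in> B, then on the support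
  of \<mu> both s and b already predict every label. Hence \<mu> is S-realizable, so the comparative
  guarantee applies, and b has error 0, so the benchmark INF b\<in>B. herr \<mu> b vanishes and the
  comparative guarantee is exactly the realizable one.\<close>

lemma prob_hyp_correct_eq_1_iff:
  "measure_pmf.prob \<mu> {(x, y). h x = Some y} = 1 \<longleftrightarrow> (\<forall>(x, y)\<in>set_pmf \<mu>. h x = Some y)"
  by (subst measure_pmf.prob_eq_1) (auto simp: AE_measure_pmf_iff)

lemma herr_eq_0_iff: "herr \<mu> h = 0 \<longleftrightarrow> (\<forall>(x, y)\<in>set_pmf \<mu>. h x = Some y)"
  unfolding herr_def measure_pmf_zero_iff by auto

lemma herr_nonneg: "herr \<mu> h \<ge> 0"
  unfolding herr_def by simp

lemma realizable_iff_support: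
  "realizable H \<mu> \<longleftrightarrow> (\<exists>h\<in>H. \<forall>(x, y)\<in>set_pmf \<mu>. h x = Some y)"
  unfolding realizable_def prob_hyp_correct_eq_1_iff ..

lemma agree_eq_SomeD: "agree s b x = Some y \<Longrightarrow> s x = Some y \<and> b x = Some y"
  by (cases y) (auto simp: agree_def split: if_splits)

lemma realizable_agreeClassD:
  assumes "realizable (agreeClass S B) \<mu>"
  shows "realizable S \<mu>" and "realizable B \<mu>"
proof -
  from assms obtain s b where "s \<in> S" "b \<in> B"
    and agree_correct: "\<forall>(x, y)\<in>set_pmf \<mu>. agree s b x = Some y"
    unfolding realizable_iff_support agreeClass_def by blast
  have "s x = Some y \<and> b x = Some y" if "(x, y) \<in> set_pmf \<mu>" for x y
    using bspec[OF agree_correct that] by (auto dest: agree_eq_SomeD)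
  with \<open>s \<in> S\<close> \<open>b \<in> B\<close> show "realizable S \<mu>" "realizable B \<mu>"
    unfolding realizable_iff_support by auto
qed

lemma INF_herr_eq_0_if_realizable:
  assumes "realizable B \<mu>"
  shows "(INF b\<in>B. herr \<mu> b) = 0"
proof -
  from assms obtain b where "b \<in> B" "herr \<mu> b = 0"
    unfolding realizable_iff_support herr_eq_0_iff by blast
  have "bdd_below (herr \<mu> ` B)"
    using herr_nonneg by (rule bdd_belowI2)
  then have "(INF c\<in>B. herr \<mu> c) \<le> 0"
    using cINF_lower \<open>b \<in> B\<close> \<open>herr \<mu> b = 0\<close> by metis
  moreover have "(INF c\<in>B. herr \<mu> c) \<ge> 0"
    using \<open>b \<in> B\<close> by (auto intro!: cINF_greatest herr_nonneg)
  ultimately show ?thesis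
    by (rule antisym)
qed

theorem lemma3p7:
  fixes S B :: "'x hyp set" and \<epsilon> \<delta> :: real and n :: nat
  assumes "\<epsilon> \<ge> 0" and "\<delta> \<ge> 0"
  shows "CompL n S B \<epsilon> \<delta> \<subseteq> ReaL n (agreeClass S B) \<epsilon> \<delta>"
proof
  fix L assume L: "L \<in> CompL n S B \<epsilon> \<delta>"
  show "L \<in> ReaL n (agreeClass S B) \<epsilon> \<delta>"
    unfolding ReaL_def
  proof (intro CollectI allI impI)
    fix \<mu> assume "realizable (agreeClass S B) \<mu>"
    then have "realizable S \<mu>" and "(INF b\<in>B. herr \<mu> b) = 0"
      using realizable_agreeClassD INF_herr_eq_0_if_realizable by blast+
    with L show "measure_pmf.prob (bind_pmf (replicate_pmf n \<mu>) L) {f. err \<mu> f \<le> \<epsilon>} \<ge> 1 - \<delta>"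
      unfolding CompL_def by auto
  qed
qed

end
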